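(* Let $(x,y,z)\in E_k$ with $x,y,z$ all non-zero. Write $x=2\cos\theta_x$, $y=2\cos\theta_y$, $z=2\cos\theta_z$, $xz-y=2\cos\theta_{xz-y}$ with $\theta_x,\theta_y,\theta_z,\theta_{xz-y}\in[0,\pi]$, so that $$\cos(\theta_x+\theta_z)+\cos(\theta_x-\theta_z)-\cos(\theta_y)-\cos(\theta_{xz-y})=0.$$ If two of the four terms $\cos(\theta_x+\theta_z)$, $\cos(\theta_x-\theta_z)$, $-\cos(\theta_y)$, $-\cos(\theta_{xz-y})$ sum to zero, then $k=2$.
   Context: $E$ is the set $\{(x,y,z)\in[-2,2]^3:-2\le x^2+y^2+z^2-xyz-2\le2\}$ (the $\mathrm{SU}(2)$ character variety of the one-holed torus in trace coordinates), and $E_k=\{(x,y,z)\in E:x^2+y^2+z^2-xyz-2=k\}$. The map $(x,y,z)\mapsto(x,z,xz-y)$ preserves $E$, so $xz-y\in[-2,2]$. *)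

theory Defs
  imports Complex_Main
begin

definition kappa :: "real \<Rightarrow> real \<Rightarrow> real \<Rightarrow> real" where
  "kappa x y z = x^2 + y^2 + z^2 - x*y*z - 2"

text \<open>The SU(2) character variety of the one-holed torus in trace coordinates.\<close>
definition E :: "(real \<times> real \<times> real) set" where
  "E = {(x,y,z). x \<in> {-2..2} \<and> y \<in> {-2..2} \<and> z \<in> {-2..2} \<and>
                 -2 \<le> kappa x y z \<and> kappa x y z \<le> 2}"

definition E_k :: "real \<Rightarrow> (real \<times> real \<times> real) set" where
  "E_k k = {(x,y,z). (x,y,z) \<in> E \<and> kappa x y z = k}"

end

theory Submission
  imports Defs
begin

text \<open>With \<open>a = cos (\<theta>x + \<theta>z)\<close>, \<open>b = cos (\<theta>x - \<theta>z)\<close> and \<open>c = cos \<theta>y\<close>, the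
  product-to-sum formulas give \<open>a + b = x z / 2\<close> and \<open>a b = (x\<^sup>2 + z\<^sup>2) / 4 - 1\<close>, whence
  \<open>k - 2 = 4 (c - a) (c - b)\<close>. The fourth term is \<open>-cos \<theta>w = c - a - b\<close>, so of the six
  pair sums, \<open>a + b\<close> and \<open>-c - cos \<theta>w\<close> equal \<open>\<plusminus>x z / 2 \<noteq> 0\<close>, while the other four
  are \<open>\<plusminus>(a - c)\<close> or \<open>\<plusminus>(b - c)\<close>. Hence a vanishing pair sum forces \<open>k = 2\<close>.\<close>

lemma cos_add_plus_cos_diff:
  fixes u v :: real
  shows "cos (u + v) + cos (u - v) = 2 * cos u * cos v"
  by (simp add: cos_add cos_diff)

lemma cos_add_times_cos_diff:
  fixes u v :: real
  shows "cos (u + v) * cos (u - v) = (cos u)\<^sup>2 + (cos v)\<^sup>2 - 1"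
proof -
  have "cos (u + v) * cos (u - v) = (cos u * cos v)\<^sup>2 - (sin u * sin v)\<^sup>2"
    by (simp add: cos_add cos_diff power2_eq_square algebra_simps)
  also have "\<dots> = (cos u)\<^sup>2 + (cos v)\<^sup>2 - 1"
    by (simp add: power_mult_distrib sin_squared_eq algebra_simps)
  finally show ?thesis .
qed

lemma kappa_cos_minus_two:
  "kappa (2 * cos u) (2 * c) (2 * cos v) - 2 = 4 * (c - cos (u + v)) * (c - cos (u - v))"
proof -
  have "kappa (2 * cos u) (2 * c) (2 * cos v) - 2
      = 4 * ((cos u)\<^sup>2 + (cos v)\<^sup>2 - 1) - 4 * c * (2 * cos u * cos v) + 4 * c\<^sup>2"
    by (simp add: kappa_def power2_eq_square algebra_simps)
  also have "\<dots> = 4 * (cos (u + v) * cos (u - v)) - 4 * c * (cos (u + v) + cos (u - v)) + 4 * c\<^sup>2"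
    by (simp only: cos_add_plus_cos_diff cos_add_times_cos_diff)
  also have "\<dots> = 4 * (c - cos (u + v)) * (c - cos (u - v))"
    by (simp add: algebra_simps power2_eq_square)
  finally show ?thesis .
qed

theorem proposition5p1:
  fixes x y z k \<theta>x \<theta>y \<theta>z \<theta>w :: real
  assumes "(x, y, z) \<in> E_k k"
    and "x \<noteq> 0" and "y \<noteq> 0" and "z \<noteq> 0"
    and "\<theta>x \<in> {0..pi}" and "\<theta>y \<in> {0..pi}" and "\<theta>z \<in> {0..pi}" and "\<theta>w \<in> {0..pi}"
    and "x = 2 * cos \<theta>x" and "y = 2 * cos \<theta>y" and "z = 2 * cos \<theta>z"
    and "x * z - y = 2 * cos \<theta>w"
    and "(let t1 = cos (\<theta>x + \<theta>z); t2 = cos (\<theta>x - \<theta>z);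
              t3 = - cos \<theta>y; t4 = - cos \<theta>w
          in t1 + t2 = 0 \<or> t1 + t3 = 0 \<or> t1 + t4 = 0 \<or>
             t2 + t3 = 0 \<or> t2 + t4 = 0 \<or> t3 + t4 = 0)"
  shows "k = 2"
proof -
  define a where "a = cos (\<theta>x + \<theta>z)"
  define b where "b = cos (\<theta>x - \<theta>z)"
  have k_factor: "k - 2 = 4 * (cos \<theta>y - a) * (cos \<theta>y - b)"
    using assms(1,9-11) kappa_cos_minus_two[of \<theta>x "cos \<theta>y" \<theta>z]
    by (simp add: E_k_def a_def b_def)
  have sum_ab: "a + b = x * z / 2"
    using assms(9,11) by (simp add: a_def b_def cos_add_plus_cos_diff)
  have "a + b \<noteq> 0"
    using assms(2,4) by (simp add: sum_ab)
  moreover have "cos \<theta>w = a + b - cos \<theta>y"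
    using assms(10,12) sum_ab by simp
  ultimately have "cos \<theta>y = a \<or> cos \<theta>y = b"
    using assms(13) by (auto simp: Let_def simp flip: a_def b_def)
  then show ?thesis
    using k_factor by auto
qed

end
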